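(* Assume $d\ge3$ and $d'=1$, write the unique row of $V$ as $v=(v_1,\dots,v_d)$, and fix $j\in[t]$. For parameters $W$, let $T=(T_{k_1k_2k_3})_{k_1,k_2,k_3\in[d]}$ be the symmetric tensor with $T_{k_1k_2k_3}=y_j(\{k_1,k_2,k_3\})$ evaluated at $\mu(W)$, and let $f_T(x)=\sum_{k_1,k_2,k_3\in[d]}T_{k_1k_2k_3}x_{k_1}x_{k_2}x_{k_3}$. Let $N=(T_{k,k,k_3})_{k,k_3\in[d]}\in\mathbb R^{d\times d}$. Then: (1) $\operatorname{rank}(N)\le 2\operatorname{rank}(A)+1$; in particular, if $2\operatorname{rank}(A)+1<d$ then all $(2\operatorname{rank}(A)+2)$-minors of $N$ vanish. (2) $f_T(x)=(x^\top Ax)(v^\top x)$, so $f_T$ is a product of a linear form and a quadratic form (if $f_T\neq0$, $[f_T]$ lies on the Chow variety of split type $(2,1)$ in $\mathbb P(S^3)$). Consequently $M_{\mathrm{Lie}}(f_T)$ has rank $<d^2-1$, and every maximal $(d^2-1)\times(d^2-1)$ minor of $M_{\mathrm{Lie}}$, regarded as a polynomial in the coordinates $y_j(\mathcal K)$ via the coefficients of $f_T$, vanishes on the attention variety.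
   Context: Setup: $Q,K\in\mathbb R^{a\times d}$, $V\in\mathbb R^{1\times d}$, $A=K^\top Q$, $\varphi_W(X)=VX(X^\top AX)$ for $X=(x_{kn})\in\mathbb R^{d\times t}$. For $\mathcal K\in\operatorname{Mult}_3([d])$ (size-3 multisets on $[d]$), $c_j(\mathcal K)$ is the coefficient of $\prod_{u\in\mathcal K}x_{uj}$ in $\varphi_W(X)[1,j]$ and $y_j(\mathcal K)=c_j(\mathcal K)/|\operatorname{Perm}(\mathcal K)|$, where $\operatorname{Perm}(\mathcal K)$ is the set of distinct orderings of $\mathcal K$. The map $\mu$ sends $W$ to all such scaled coefficients (and the analogous scaled cross-column coefficients); the attention variety is the Zariski closure of $\operatorname{im}\mu$. $S^3$ is the space of cubic forms in $x_1,\dots,x_d$. The Lie algebra flattening matrix $M_{\mathrm{Lie}}(f)$ of a cubic $f$ is the $\binom{d+2}{3}\times(d^2-1)$ matrix, in the monomial basis of $S^3$ and the basis $\{E_{uv}\ (u\ne v),\ H_u=E_{uu}-E_{dd}\ (u<d)\}$ of $\mathfrak{sl}_d$ (with $E_{uv}=x_u\partial/\partial x_v$), of the linear map $\mathfrak{sl}_d\to S^3$, $D\mapsto D(f)$, where $(m_{uv})$ acts as $\sum m_{uv}x_u\partial/\partial x_v$. The Chow variety of split type $(2,1)$ is the image of $\mathbb P(S^1)\times\mathbb P(S^2)\to\mathbb P(S^3)$, $([\ell],[q])\mapsto[\ell q]$. *)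

theory Defs
  imports "Jordan_Normal_Form.DL_Rank_Submatrix" "HOL-Library.Poly_Mapping"
    "HOL-Library.Multiset" "HOL-Combinatorics.Multiset_Permutations"
begin

text \<open>Polynomials in the entries x_kn of X (k = row, n = column), real coefficients,
  monomials are finitely supported exponent maps (nat \<times> nat) \<Rightarrow> nat.
  Indices are 0-based: [d] is {0..<d}, [t] is {0..<t}.\<close>

type_synonym rpoly = "((nat \<times> nat) \<Rightarrow>\<^sub>0 nat) \<Rightarrow>\<^sub>0 real"

definition pvar :: "nat \<Rightarrow> nat \<Rightarrow> rpoly" where
  "pvar k n = Poly_Mapping.single (Poly_Mapping.single (k, n) 1) 1"

definition pconst :: "real \<Rightarrow> rpoly" where
  "pconst c = Poly_Mapping.single 0 c"

definition Xmat :: "nat \<Rightarrow> nat \<Rightarrow> rpoly mat" where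
  "Xmat d t = mat d t (\<lambda>(k, n). pvar k n)"

definition attn_A :: "real mat \<Rightarrow> real mat \<Rightarrow> real mat" where
  "attn_A Q K = transpose_mat K * Q"

definition phi :: "real mat \<Rightarrow> real mat \<Rightarrow> real mat \<Rightarrow> nat \<Rightarrow> rpoly mat" where
  "phi Q K V t = (let X = Xmat (dim_col Q) t in
      map_mat pconst V * X * (transpose_mat X * map_mat pconst (attn_A Q K) * X))"

definition col_monomial :: "nat \<Rightarrow> nat multiset \<Rightarrow> (nat \<times> nat) \<Rightarrow>\<^sub>0 nat" where
  "col_monomial j Km = sum_mset (image_mset (\<lambda>u. Poly_Mapping.single (u, j) (1::nat)) Km)"

definition coeff_c :: "real mat \<Rightarrow> real mat \<Rightarrow> real mat \<Rightarrow> nat \<Rightarrow> nat \<Rightarrow> nat multiset \<Rightarrow> real" where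
  "coeff_c Q K V t j Km = Poly_Mapping.lookup (phi Q K V t $$ (0, j)) (col_monomial j Km)"

definition y_coord :: "real mat \<Rightarrow> real mat \<Rightarrow> real mat \<Rightarrow> nat \<Rightarrow> nat \<Rightarrow> nat multiset \<Rightarrow> real" where
  "y_coord Q K V t j Km = coeff_c Q K V t j Km / real (card (permutations_of_multiset Km))"

definition T_tensor :: "real mat \<Rightarrow> real mat \<Rightarrow> real mat \<Rightarrow> nat \<Rightarrow> nat \<Rightarrow> nat \<Rightarrow> nat \<Rightarrow> nat \<Rightarrow> real" where
  "T_tensor Q K V t j k1 k2 k3 = y_coord Q K V t j {#k1, k2, k3#}"

definition f_T :: "nat \<Rightarrow> (nat \<Rightarrow> nat \<Rightarrow> nat \<Rightarrow> real) \<Rightarrow> (nat \<Rightarrow> real) \<Rightarrow> real" where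
  "f_T d T x = (\<Sum>k1<d. \<Sum>k2<d. \<Sum>k3<d. T k1 k2 k3 * x k1 * x k2 * x k3)"

definition N_mat :: "nat \<Rightarrow> (nat \<Rightarrow> nat \<Rightarrow> nat \<Rightarrow> real) \<Rightarrow> real mat" where
  "N_mat d T = mat d d (\<lambda>(k, k3). T k k k3)"

text \<open>Coefficients of f_T in the monomial basis of S^3: the coefficient of x^m
  (m a size-3 multiset) is the sum of T over all index triples with multiset m.\<close>
definition cubic_coeff :: "nat \<Rightarrow> (nat \<Rightarrow> nat \<Rightarrow> nat \<Rightarrow> real) \<Rightarrow> nat multiset \<Rightarrow> real" where
  "cubic_coeff d T m = (\<Sum>k1<d. \<Sum>k2<d. \<Sum>k3<d. if {#k1, k2, k3#} = m then T k1 k2 k3 else 0)"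

definition monos3 :: "nat \<Rightarrow> nat multiset list" where
  "monos3 d = [{#a, b, c#}. c \<leftarrow> [0..<d], b \<leftarrow> [0..<Suc c], a \<leftarrow> [0..<Suc b]]"

text \<open>Basis of sl_d: Inl (u,v) is E_uv (u \<noteq> v), Inr u is H_u = E_uu - E_{d-1,d-1} (u < d-1).\<close>
definition sl_basis :: "nat \<Rightarrow> ((nat \<times> nat) + nat) list" where
  "sl_basis d = [Inl (u, v). u \<leftarrow> [0..<d], v \<leftarrow> [0..<d], u \<noteq> v] @ [Inr u. u \<leftarrow> [0..<d - 1]]"

text \<open>Action of E_uv = x_u d/dx_v on a cubic given by its coefficient function cf:
  the coefficient of x^m' in E_uv(f).\<close>
definition E_act :: "nat \<Rightarrow> nat \<Rightarrow> (nat multiset \<Rightarrow> real) \<Rightarrow> nat multiset \<Rightarrow> real" where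
  "E_act u v cf m' = (if u \<in># m' then
      (let m0 = m' - {#u#} + {#v#} in real (count m0 v) * cf m0) else 0)"

definition lie_act :: "nat \<Rightarrow> (nat multiset \<Rightarrow> real) \<Rightarrow> ((nat \<times> nat) + nat) \<Rightarrow> nat multiset \<Rightarrow> real" where
  "lie_act d cf b m = (case b of
      Inl (u, v) \<Rightarrow> E_act u v cf m
    | Inr u \<Rightarrow> E_act u u cf m - E_act (d - 1) (d - 1) cf m)"

definition M_Lie :: "nat \<Rightarrow> (nat multiset \<Rightarrow> real) \<Rightarrow> real mat" where
  "M_Lie d cf = mat (length (monos3 d)) (length (sl_basis d))
      (\<lambda>(i, k). lie_act d cf (sl_basis d ! k) (monos3 d ! i))"

end

theory Submission
  imports Defs
begin

text \<open>
  With a single output row, phi_W(X)[1,j] = sum_n (v . x_n) (x_n^T A x_j), and the monomials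
  supported in column j arise only from n = j. Hence T is the symmetrization of the tensor
  v_k A_pq, and f_T(x) = (x^T A x)(v^T x). Factoring A = P R through rank A terms shows that
  N_kc = (v_k (A_kc + A_ck) + A_kk v_c) / 3 is a sum of 2 rank A + 1 matrices of rank one.
  For the flattening, d \<ge> 3 provides nonzero orthogonal alpha, beta orthogonal to v, from which
  one builds a nonzero traceless M with M v = 0 and M (A + A^T) skew-symmetric. The derivation
  sum M_uw x_u d/dx_w then annihilates both factors of f_T, so M is a nonzero kernel vector of
  M_Lie(f_T); in particular all its maximal minors vanish.
\<close>

section \<open>Symmetrized cubic tensors\<close>

definition sym3 :: "('i \<Rightarrow> 'i \<Rightarrow> 'i \<Rightarrow> 'a::field) \<Rightarrow> 'i \<Rightarrow> 'i \<Rightarrow> 'i \<Rightarrow> 'a" where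
  "sym3 g a b c = (g a b c + g a c b + g b a c + g b c a + g c a b + g c b a) / 6"

lemma mset3_eq_iff:
  "{#k, p, q#} = {#a, b, c#} \<longleftrightarrow>
     (k, p, q) \<in> {(a, b, c), (a, c, b), (b, a, c), (b, c, a), (c, a, b), (c, b, a)}"
  by (auto simp: add_eq_conv_ex add_mset_commute)

lemma sym3_cong_mset:
  assumes "{#k, p, q#} = {#a, b, c#}"
  shows "sym3 g k p q = sym3 g a b c"
  using assms unfolding mset3_eq_iff sym3_def by (auto simp: algebra_simps)

lemma sum3_permute:
  fixes F :: "'i \<Rightarrow> 'i \<Rightarrow> 'i \<Rightarrow> 'a::comm_monoid_add"
  shows "(\<Sum>a\<in>I. \<Sum>b\<in>I. \<Sum>c\<in>I. F a c b) = (\<Sum>a\<in>I. \<Sum>b\<in>I. \<Sum>c\<in>I. F a b c)"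
    and "(\<Sum>a\<in>I. \<Sum>b\<in>I. \<Sum>c\<in>I. F b a c) = (\<Sum>a\<in>I. \<Sum>b\<in>I. \<Sum>c\<in>I. F a b c)"
    and "(\<Sum>a\<in>I. \<Sum>b\<in>I. \<Sum>c\<in>I. F b c a) = (\<Sum>a\<in>I. \<Sum>b\<in>I. \<Sum>c\<in>I. F a b c)"
    and "(\<Sum>a\<in>I. \<Sum>b\<in>I. \<Sum>c\<in>I. F c a b) = (\<Sum>a\<in>I. \<Sum>b\<in>I. \<Sum>c\<in>I. F a b c)"
    and "(\<Sum>a\<in>I. \<Sum>b\<in>I. \<Sum>c\<in>I. F c b a) = (\<Sum>a\<in>I. \<Sum>b\<in>I. \<Sum>c\<in>I. F a b c)"
proof -
  have swap12: "(\<Sum>a\<in>I. \<Sum>b\<in>I. \<Sum>c\<in>I. G b a c) = (\<Sum>a\<in>I. \<Sum>b\<in>I. \<Sum>c\<in>I. G a b c)"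
    for G :: "'i \<Rightarrow> 'i \<Rightarrow> 'i \<Rightarrow> 'a"
    by (rule sum.swap)
  have swap23: "(\<Sum>a\<in>I. \<Sum>b\<in>I. \<Sum>c\<in>I. G a c b) = (\<Sum>a\<in>I. \<Sum>b\<in>I. \<Sum>c\<in>I. G a b c)"
    for G :: "'i \<Rightarrow> 'i \<Rightarrow> 'i \<Rightarrow> 'a"
    by (rule sum.cong[OF refl], rule sum.swap)
  show "(\<Sum>a\<in>I. \<Sum>b\<in>I. \<Sum>c\<in>I. F a c b) = (\<Sum>a\<in>I. \<Sum>b\<in>I. \<Sum>c\<in>I. F a b c)"
    by (rule swap23)
  show "(\<Sum>a\<in>I. \<Sum>b\<in>I. \<Sum>c\<in>I. F b a c) = (\<Sum>a\<in>I. \<Sum>b\<in>I. \<Sum>c\<in>I. F a b c)"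
    by (rule swap12)
  show "(\<Sum>a\<in>I. \<Sum>b\<in>I. \<Sum>c\<in>I. F b c a) = (\<Sum>a\<in>I. \<Sum>b\<in>I. \<Sum>c\<in>I. F a b c)"
    using swap12[of "\<lambda>a b c. F a c b"] swap23[of F] by simp
  show "(\<Sum>a\<in>I. \<Sum>b\<in>I. \<Sum>c\<in>I. F c a b) = (\<Sum>a\<in>I. \<Sum>b\<in>I. \<Sum>c\<in>I. F a b c)"
    using swap23[of "\<lambda>a b c. F b a c"] swap12[of F] by simp
  show "(\<Sum>a\<in>I. \<Sum>b\<in>I. \<Sum>c\<in>I. F c b a) = (\<Sum>a\<in>I. \<Sum>b\<in>I. \<Sum>c\<in>I. F a b c)"
    using swap12[of "\<lambda>a b c. F c a b"] swap23[of "\<lambda>a b c. F b a c"] swap12[of F] by simp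
qed

lemma sum3_sym3:
  fixes F :: "'i \<Rightarrow> 'i \<Rightarrow> 'i \<Rightarrow> 'a::field_char_0"
  shows "(\<Sum>a\<in>I. \<Sum>b\<in>I. \<Sum>c\<in>I. sym3 F a b c) = (\<Sum>a\<in>I. \<Sum>b\<in>I. \<Sum>c\<in>I. F a b c)"
  using sum3_permute[of F I] by (simp add: sym3_def sum.distrib flip: sum_divide_distrib)

lemma f_T_cong:
  assumes "\<And>a b c. a < d \<Longrightarrow> b < d \<Longrightarrow> c < d \<Longrightarrow> T a b c = T' a b c"
  shows "f_T d T = f_T d T'"
  using assms by (simp add: f_T_def fun_eq_iff)

lemma N_mat_cong:
  assumes "\<And>a b c. a < d \<Longrightarrow> b < d \<Longrightarrow> c < d \<Longrightarrow> T a b c = T' a b c"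
  shows "N_mat d T = N_mat d T'"
  using assms by (auto simp: N_mat_def intro!: cong_mat)

lemma cubic_coeff_cong:
  assumes "\<And>a b c. a < d \<Longrightarrow> b < d \<Longrightarrow> c < d \<Longrightarrow> T a b c = T' a b c"
  shows "cubic_coeff d T = cubic_coeff d T'"
  using assms by (auto simp: cubic_coeff_def intro!: sum.cong ext)

lemma f_T_sym3:
  "f_T d (sym3 g) x = (\<Sum>k<d. \<Sum>p<d. \<Sum>q<d. g k p q * x k * x p * x q)"
proof -
  have "sym3 g k p q * x k * x p * x q = sym3 (\<lambda>k p q. g k p q * x k * x p * x q) k p q" for k p q
    by (simp add: sym3_def algebra_simps)
  then show ?thesis
    unfolding f_T_def by (simp add: sum3_sym3)
qed

lemma f_T_sym3_linear_quadratic: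
  "f_T d (sym3 (\<lambda>k p q. v k * A p q)) x = (\<Sum>p<d. \<Sum>q<d. x p * A p q * x q) * (\<Sum>u<d. v u * x u)"
proof -
  have "f_T d (sym3 (\<lambda>k p q. v k * A p q)) x = (\<Sum>k<d. (v k * x k) * (\<Sum>p<d. \<Sum>q<d. x p * A p q * x q))"
    unfolding f_T_sym3 by (simp add: sum_distrib_left mult_ac)
  then show ?thesis
    by (metis (no_types) mult.commute sum_distrib_right)
qed

section \<open>The coefficient tensor of the attention map\<close>

lemma lookup_col_monomial:
  "Poly_Mapping.lookup (col_monomial j m) (u, n) = (if n = j then count m u else 0)"
  by (induction m) (auto simp: col_monomial_def lookup_add lookup_single when_def)

lemma monomial3_eq_col_monomial_iff:
  "Poly_Mapping.single (k, n) 1 + Poly_Mapping.single (p, n) 1 + Poly_Mapping.single (q, j) (1::nat)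
     = col_monomial j m \<longleftrightarrow> n = j \<and> {#k, p, q#} = m"
    (is "?mono = _ \<longleftrightarrow> _")
proof
  have lookup_mono: "Poly_Mapping.lookup ?mono (u, n') =
      (if (k, n) = (u, n') then 1 else 0) + (if (p, n) = (u, n') then 1 else 0) + (if (q, j) = (u, n') then 1 else 0)"
    for u n'
    by (simp add: lookup_add lookup_single when_def)
  assume eq: "?mono = col_monomial j m"
  have "n = j"
    using arg_cong[OF eq, of "\<lambda>f. Poly_Mapping.lookup f (k, n)"]
    unfolding lookup_mono lookup_col_monomial by (simp split: if_splits)
  moreover have "count {#k, p, q#} u = count m u" for u
    using arg_cong[OF eq, of "\<lambda>f. Poly_Mapping.lookup f (u, j)"] \<open>n = j\<close>
    unfolding lookup_mono lookup_col_monomial by (auto split: if_splits)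
  ultimately show "n = j \<and> {#k, p, q#} = m"
    by (simp add: multiset_eq_iff)
next
  assume "n = j \<and> {#k, p, q#} = m"
  then show "?mono = col_monomial j m"
    by (auto simp: col_monomial_def add_ac)
qed

lemma index_phi:
  assumes "Q \<in> carrier_mat a d" "K \<in> carrier_mat a d" "V \<in> carrier_mat 1 d" "j < t"
  shows "phi Q K V t $$ (0, j) = (\<Sum>n<t. \<Sum>k<d. \<Sum>p<d. \<Sum>q<d.
    Poly_Mapping.single
      (Poly_Mapping.single (k, n) 1 + Poly_Mapping.single (p, n) 1 + Poly_Mapping.single (q, j) 1)
      (V $$ (0, k) * attn_A Q K $$ (p, q)))"
proof -
  have "phi Q K V t $$ (0, j) = (\<Sum>n<t. (\<Sum>k<d. pconst (V $$ (0, k)) * pvar k n) *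
      (\<Sum>q<d. (\<Sum>p<d. pvar p n * pconst (attn_A Q K $$ (p, q))) * pvar q j))"
    using assms unfolding phi_def Let_def
    by (simp add: index_mult_mat scalar_prod_def Xmat_def attn_A_def atLeast0LessThan)
  also have "\<dots> = (\<Sum>n<t. \<Sum>q<d. \<Sum>p<d. \<Sum>k<d.
    Poly_Mapping.single
      (Poly_Mapping.single (k, n) 1 + Poly_Mapping.single (p, n) 1 + Poly_Mapping.single (q, j) 1)
      (V $$ (0, k) * attn_A Q K $$ (p, q)))"
    by (simp add: sum_distrib_left sum_distrib_right pconst_def pvar_def mult_single add.assoc)
  also have "\<dots> = (\<Sum>n<t. \<Sum>k<d. \<Sum>p<d. \<Sum>q<d.
    Poly_Mapping.single
      (Poly_Mapping.single (k, n) 1 + Poly_Mapping.single (p, n) 1 + Poly_Mapping.single (q, j) 1)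
      (V $$ (0, k) * attn_A Q K $$ (p, q)))"
    by (rule sum.cong[OF refl], rule sum3_permute(5))
  finally show ?thesis .
qed

lemma coeff_c_eq_sum:
  assumes "Q \<in> carrier_mat a d" "K \<in> carrier_mat a d" "V \<in> carrier_mat 1 d" "j < t"
  shows "coeff_c Q K V t j m =
    (\<Sum>k<d. \<Sum>p<d. \<Sum>q<d. if {#k, p, q#} = m then V $$ (0, k) * attn_A Q K $$ (p, q) else 0)"
    (is "_ = ?coeff")
proof -
  have "coeff_c Q K V t j m = (\<Sum>n<t. \<Sum>k<d. \<Sum>p<d. \<Sum>q<d.
      if n = j \<and> {#k, p, q#} = m then V $$ (0, k) * attn_A Q K $$ (p, q) else 0)"
    unfolding coeff_c_def index_phi[OF assms]
    by (simp only: lookup_sum lookup_single when_def monomial3_eq_col_monomial_iff)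
  also have "\<dots> = (\<Sum>n<t. if n = j then ?coeff else 0)"
    by (rule sum.cong) auto
  finally show ?thesis
    using assms(4) by simp
qed

lemma card_triples_eq_card_permutations:
  assumes "a < d" "b < d" "c < d"
  shows "card {(k, p, q). k < d \<and> p < d \<and> q < d \<and> {#k, p, q#} = {#a, b, c#}}
    = card (permutations_of_multiset {#a, b, c#})" (is "card ?triples = card ?perms")
proof (rule bij_betw_same_card, rule bij_betw_imageI)
  show "inj_on (\<lambda>(k, p, q). [k, p, q]) ?triples"
    by (auto simp: inj_on_def)
  have "xs \<in> (\<lambda>(k, p, q). [k, p, q]) ` ?triples" if "mset xs = {#a, b, c#}" for xs
  proof -
    have "length xs = 3"
      using arg_cong[OF that, of size] by simp
    then obtain k p q where xs: "xs = [k, p, q]"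
      by (auto simp: length_Suc_conv numeral_3_eq_3)
    moreover have "{#k, p, q#} = {#a, b, c#}"
      using that by (simp add: xs)
    moreover from this have "k < d \<and> p < d \<and> q < d"
      using assms by (auto simp: mset3_eq_iff)
    ultimately show ?thesis
      by (auto intro!: image_eqI[of _ _ "(k, p, q)"])
  qed
  then show "(\<lambda>(k, p, q). [k, p, q]) ` ?triples = ?perms"
    by (auto simp: permutations_of_multiset_def)
qed

lemma sum_if_mset3_eq_sym3:
  fixes g :: "nat \<Rightarrow> nat \<Rightarrow> nat \<Rightarrow> 'a::field_char_0"
  assumes "a < d" "b < d" "c < d"
  shows "(\<Sum>k<d. \<Sum>p<d. \<Sum>q<d. if {#k, p, q#} = {#a, b, c#} then g k p q else 0)
    = of_nat (card (permutations_of_multiset {#a, b, c#})) * sym3 g a b c"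
proof -
  let ?m = "{#a, b, c#}"
  have "(\<Sum>k<d. \<Sum>p<d. \<Sum>q<d. if {#k, p, q#} = ?m then g k p q else 0)
      = (\<Sum>k<d. \<Sum>p<d. \<Sum>q<d. sym3 (\<lambda>k p q. if {#k, p, q#} = ?m then g k p q else 0) k p q)"
    by (rule sum3_sym3[symmetric])
  also have "\<dots> = (\<Sum>k<d. \<Sum>p<d. \<Sum>q<d. if {#k, p, q#} = ?m then sym3 g a b c else 0)"
  proof (intro sum.cong refl)
    fix k p q
    have "sym3 (\<lambda>k p q. if {#k, p, q#} = ?m then g k p q else 0) k p q
        = (if {#k, p, q#} = ?m then sym3 g k p q else 0)"
      by (simp add: sym3_def add_mset_commute)
    then show "sym3 (\<lambda>k p q. if {#k, p, q#} = ?m then g k p q else 0) k p q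
        = (if {#k, p, q#} = ?m then sym3 g a b c else 0)"
      using sym3_cong_mset[of k p q a b c g] by simp
  qed
  also have "\<dots> = (\<Sum>(k, p, q)\<in>{..<d} \<times> {..<d} \<times> {..<d}. if {#k, p, q#} = ?m then sym3 g a b c else 0)"
    by (simp add: sum.cartesian_product)
  also have "\<dots> = of_nat (card {(k, p, q). k < d \<and> p < d \<and> q < d \<and> {#k, p, q#} = ?m}) * sym3 g a b c"
  proof -
    have "{x \<in> {..<d} \<times> {..<d} \<times> {..<d}. case x of (k, p, q) \<Rightarrow> {#k, p, q#} = ?m}
        = {(k, p, q). k < d \<and> p < d \<and> q < d \<and> {#k, p, q#} = ?m}"
      by auto
    then show ?thesis
      by (simp add: case_prod_unfold flip: sum.inter_filter)
  qed
  finally show ?thesis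
    using card_triples_eq_card_permutations[OF assms] by simp
qed

lemma T_tensor_eq_sym3:
  assumes "Q \<in> carrier_mat a d" "K \<in> carrier_mat a d" "V \<in> carrier_mat 1 d" "j < t"
    and "k1 < d" "k2 < d" "k3 < d"
  shows "T_tensor Q K V t j k1 k2 k3 = sym3 (\<lambda>k p q. V $$ (0, k) * attn_A Q K $$ (p, q)) k1 k2 k3"
proof -
  have "card (permutations_of_multiset {#k1, k2, k3#}) \<noteq> 0"
    by simp
  then show ?thesis
    unfolding T_tensor_def y_coord_def coeff_c_eq_sum[OF assms(1-4)] sum_if_mset3_eq_sym3[OF assms(5-7)]
    by simp
qed

section \<open>Rank bounds\<close>

lemma (in vec_space) col_in_span_maximal_indpt:
  assumes A: "A \<in> carrier_mat n nc" and S: "maximal S (\<lambda>T. T \<subseteq> set (cols A) \<and> lin_indpt T)"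
    and q: "q < nc"
  shows "col A q \<in> span S"
proof -
  have S_cols: "S \<subseteq> set (cols A)" and S_indpt: "lin_indpt S"
    using S unfolding maximal_def by auto
  have S_carrier: "S \<subseteq> carrier_vec n"
    using S_cols A cols_dim by blast
  show ?thesis
  proof (cases "col A q \<in> S")
    case True
    then show ?thesis
      using span_mem[OF S_carrier] by auto
  next
    case False
    have col_q: "col A q \<in> set (cols A)"
      using q A by (metis cols_length cols_nth carrier_matD(2) nth_mem)
    then have "lin_dep (insert (col A q) S)"
      using S S_cols False unfolding maximal_def by blast
    then show ?thesis
      using lin_dep_iff_in_span[OF S_carrier S_indpt _ False] col_q A cols_dim by auto
  qed
qed

lemma (in vec_space) rank_factorization:
  assumes A: "A \<in> carrier_mat n nc"
  obtains P R where "\<And>p q. p < n \<Longrightarrow> q < nc \<Longrightarrow> A $$ (p, q) = (\<Sum>i<rank A. P p i * R i q)"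
proof -
  have "{} \<subseteq> set (cols A) \<and> lin_indpt {}"
    by (metis empty_subsetI fin_dim finite_basis_exists subset_li_is_li vec_vs vectorspace.basis_def)
  then obtain S where S: "finite S" "maximal S (\<lambda>T. T \<subseteq> set (cols A) \<and> lin_indpt T)"
    using maximal_exists_superset[of "set (cols A)" "\<lambda>T. T \<subseteq> set (cols A) \<and> lin_indpt T" "{}"]
    by auto
  have "S \<subseteq> set (cols A)"
    using S(2) unfolding maximal_def by auto
  then have S_carrier: "S \<subseteq> carrier_vec n"
    using A cols_dim by blast
  obtain coef where coef: "\<And>q. q < nc \<Longrightarrow> lincomb (coef q) S = col A q"
    using finite_in_span[OF S(1) S_carrier col_in_span_maximal_indpt[OF A S(2)]] by metis
  obtain bs where bs: "set bs = S" "distinct bs"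
    using finite_distinct_list[OF S(1)] by blast
  have length_bs: "length bs = rank A"
    using rank_card_indpt[OF A S(2)] bs distinct_card by metis
  show ?thesis
  proof
    fix p q assume p: "p < n" and q: "q < nc"
    have "A $$ (p, q) = lincomb (coef q) S $ p"
      using coef[OF q] p q A by simp
    also have "\<dots> = (\<Sum>x\<in>S. coef q x * x $ p)"
      using lincomb_index[OF p S_carrier] .
    also have "\<dots> = (\<Sum>i<length bs. coef q (bs ! i) * bs ! i $ p)"
      using sum.reindex_bij_betw[OF bij_betw_nth[OF bs(2) refl bs(1)[symmetric]], of "\<lambda>x. coef q x * x $ p"]
      by simp
    finally show "A $$ (p, q) = (\<Sum>i<rank A. (\<lambda>p i. bs ! i $ p) p i * (\<lambda>i q. coef q (bs ! i)) i q)"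
      by (simp add: length_bs mult.commute)
  qed
qed

lemma (in vec_space) rank_sum_of_products_le:
  "rank (mat n nc (\<lambda>(k, c). \<Sum>i<m. f i k * g i c)) \<le> m"
proof (induction m)
  case 0
  have "mat n nc (\<lambda>(k, c). \<Sum>i<0. f i k * g i c) = 0\<^sub>m n nc"
    by (rule eq_matI) auto
  then show ?case
    using rank_0I[of nc] by (simp del: lessThan_0)
next
  case (Suc m)
  let ?N = "mat n nc (\<lambda>(k, c). \<Sum>i<m. f i k * g i c)"
  let ?E = "mat n nc (\<lambda>(k, c). f m k * g m c)"
  have "mat n nc (\<lambda>(k, c). \<Sum>i<Suc m. f i k * g i c) = ?N + ?E"
    by (rule eq_matI) auto
  moreover have "rank (?N + ?E) \<le> rank ?N + rank ?E"
    by (rule rank_subadditive) auto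
  moreover have "rank ?E \<le> 1"
    by (rule rank_le_1_product_entries[of _ nc "f m" "g m"]) auto
  ultimately show ?case
    using Suc by simp
qed

lemma rank_N_mat_sym3:
  assumes A: "A \<in> carrier_mat d d"
  shows "vec_space.rank d (N_mat d (sym3 (\<lambda>k p q. v k * A $$ (p, q)))) \<le> 2 * vec_space.rank d A + 1"
proof -
  interpret vec_space "TYPE(real)" d .
  obtain P R where PR: "\<And>p q. p < d \<Longrightarrow> q < d \<Longrightarrow> A $$ (p, q) = (\<Sum>i<rank A. P p i * R i q)"
    using rank_factorization[OF A] by blast
  define N1 where "N1 = mat d d (\<lambda>(k, c). \<Sum>i<rank A. v k * P k i / 3 * R i c)"
  define N2 where "N2 = mat d d (\<lambda>(k, c). \<Sum>i<rank A. v k * R i k / 3 * P c i)"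
  define N3 where "N3 = mat d d (\<lambda>(k, c). A $$ (k, k) / 3 * v c)"
  have carrier: "N1 \<in> carrier_mat d d" "N2 \<in> carrier_mat d d" "N3 \<in> carrier_mat d d"
    by (auto simp: N1_def N2_def N3_def)
  have "N_mat d (sym3 (\<lambda>k p q. v k * A $$ (p, q))) = N1 + N2 + N3"
  proof (rule eq_matI)
    fix k c assume "k < dim_row (N1 + N2 + N3)" "c < dim_col (N1 + N2 + N3)"
    then have kc: "k < d" "c < d"
      using carrier by auto
    have "N1 $$ (k, c) = v k * A $$ (k, c) / 3" "N2 $$ (k, c) = v k * A $$ (c, k) / 3"
      using kc by (simp_all add: N1_def N2_def PR sum_distrib_left sum_divide_distrib mult_ac)
    moreover have "N3 $$ (k, c) = A $$ (k, k) / 3 * v c"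
      using kc by (simp add: N3_def)
    ultimately show "N_mat d (sym3 (\<lambda>k p q. v k * A $$ (p, q))) $$ (k, c) = (N1 + N2 + N3) $$ (k, c)"
      using kc carrier by (simp add: N_mat_def sym3_def field_simps)
  qed (auto simp: N_mat_def N1_def N2_def N3_def)
  also have "rank (N1 + N2 + N3) \<le> rank N1 + rank N2 + rank N3"
    using rank_subadditive[of "N1 + N2" d N3] rank_subadditive[of N1 d N2] carrier by auto
  also have "\<dots> \<le> rank A + rank A + 1"
  proof (intro add_mono)
    show "rank N1 \<le> rank A" "rank N2 \<le> rank A"
      unfolding N1_def N2_def by (rule rank_sum_of_products_le)+
    show "rank N3 \<le> 1"
      unfolding N3_def by (rule rank_le_1_product_entries[of _ d "\<lambda>k. A $$ (k, k) / 3" v]) auto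
  qed
  finally show ?thesis
    by simp
qed

lemma det_submatrix_eq_0_of_rank_less:
  assumes M: "M \<in> carrier_mat n nc" and J: "J \<subseteq> {..<nc}" and rank: "vec_space.rank n M < card J"
  shows "det (submatrix M I J) = 0"
proof (rule ccontr)
  assume "det (submatrix M I J) \<noteq> 0"
  then have "card {j. j < nc \<and> j \<in> J} \<le> vec_space.rank n M"
    by (rule vec_space.rank_gt_minor[OF M])
  moreover have "{j. j < nc \<and> j \<in> J} = J"
    using J by auto
  ultimately show False
    using rank by simp
qed

lemma det_submatrix_UNIV_eq_0_of_rank_less:
  assumes M: "M \<in> carrier_mat n nc" and rank: "vec_space.rank n M < nc"
  shows "det (submatrix M I UNIV) = 0"
proof (rule ccontr)
  assume "det (submatrix M I UNIV) \<noteq> 0"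
  then have "card {j. j < nc \<and> j \<in> UNIV} \<le> vec_space.rank n M"
    by (rule vec_space.rank_gt_minor[OF M])
  moreover have "{j. j < nc \<and> j \<in> UNIV} = {..<nc}"
    by auto
  ultimately show False
    using rank by simp
qed

lemma (in vec_space) rank_less_of_kernel:
  assumes M: "M \<in> carrier_mat n nc" and w: "w \<in> carrier_vec nc" "w \<noteq> 0\<^sub>v nc" "M *\<^sub>v w = 0\<^sub>v n"
  shows "rank M < nc"
proof (cases "distinct (cols M)")
  case True
  have "\<not> lin_indpt (set (cols M))"
    using lin_depI[OF M w True] by simp
  then have "rank M \<noteq> nc"
    using full_rank_lin_indpt[OF M _ True] by auto
  then show ?thesis
    using rank_le_nc[OF M] by simp
next
  case False
  obtain S where S: "maximal S (\<lambda>T. T \<subseteq> set (cols M) \<and> lin_indpt T)"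
    using maximal_exists[of "\<lambda>T. T \<subseteq> set (cols M) \<and> lin_indpt T" "card (set (cols M))" "{}"]
    by (meson List.finite_set card_mono empty_iff empty_subsetI finite_lin_indpt2 rev_finite_subset)
  then have "card S \<le> card (set (cols M))"
    by (simp add: card_mono maximal_def)
  also have "\<dots> < length (cols M)"
    using False card_distinct card_length le_neq_implies_less by blast
  finally show ?thesis
    using rank_card_indpt[OF M S] M by simp
qed

section \<open>The action of gl(d) on cubic forms\<close>

lemma sum_if_zero_distrib:
  "(\<Sum>x\<in>A. if P then f x else 0) = (if P then sum f A else 0)"
  by simp

lemma mset3_replace_iff:
  assumes "u \<in># m"
  shows "{#w, b, c#} = m - {#u#} + {#w#} \<longleftrightarrow> {#u, b, c#} = m"
proof -
  have "{#w, b, c#} = m - {#u#} + {#w#} \<longleftrightarrow> {#b, c#} = m - {#u#}"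
    by simp
  also have "\<dots> \<longleftrightarrow> {#u, b, c#} = m"
    using assms by (auto simp: insert_DiffM)
  finally show ?thesis .
qed

lemma E_act_cubic_coeff:
  assumes u: "u < d" and w: "w < d"
  shows "E_act u w (cubic_coeff d T) m = (\<Sum>a<d. \<Sum>b<d. \<Sum>c<d. if {#a, b, c#} = m then
     (if a = u then T w b c else 0) + (if b = u then T a w c else 0) + (if c = u then T a b w else 0)
     else 0)" (is "_ = ?rhs")
proof (cases "u \<in># m")
  case False
  then show ?thesis
    by (auto simp: E_act_def intro!: sum.neutral)
next
  case True
  define m0 where "m0 = m - {#u#} + {#w#}"
  have m0_iff: "{#w, b, c#} = m0 \<longleftrightarrow> {#u, b, c#} = m" "{#a, w, c#} = m0 \<longleftrightarrow> {#a, u, c#} = m"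
    "{#a, b, w#} = m0 \<longleftrightarrow> {#a, b, u#} = m" for a b c
    using mset3_replace_iff[OF True] unfolding m0_def by (auto simp: add_mset_commute)
  have "E_act u w (cubic_coeff d T) m = real (count m0 w) * cubic_coeff d T m0"
    by (simp add: E_act_def True Let_def m0_def)
  also have "\<dots> = (\<Sum>a<d. \<Sum>b<d. \<Sum>c<d. if {#a, b, c#} = m0 then
      (if a = w then T a b c else 0) + (if b = w then T a b c else 0) + (if c = w then T a b c else 0) else 0)"
    unfolding cubic_coeff_def sum_distrib_left by (intro sum.cong refl) (auto simp: algebra_simps)
  also have "\<dots> = (\<Sum>a<d. \<Sum>b<d. \<Sum>c<d. if a = w then (if {#a, b, c#} = m0 then T a b c else 0) else 0)
     + (\<Sum>a<d. \<Sum>b<d. \<Sum>c<d. if b = w then (if {#a, b, c#} = m0 then T a b c else 0) else 0)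
     + (\<Sum>a<d. \<Sum>b<d. \<Sum>c<d. if c = w then (if {#a, b, c#} = m0 then T a b c else 0) else 0)"
    unfolding sum.distrib[symmetric] by (intro sum.cong refl) auto
  also have "\<dots> = (\<Sum>b<d. \<Sum>c<d. if {#w, b, c#} = m0 then T w b c else 0)
     + (\<Sum>a<d. \<Sum>c<d. if {#a, w, c#} = m0 then T a w c else 0)
     + (\<Sum>a<d. \<Sum>b<d. if {#a, b, w#} = m0 then T a b w else 0)"
    using w by (simp add: sum_if_zero_distrib)
  also have "\<dots> = (\<Sum>b<d. \<Sum>c<d. if {#u, b, c#} = m then T w b c else 0)
     + (\<Sum>a<d. \<Sum>c<d. if {#a, u, c#} = m then T a w c else 0)
     + (\<Sum>a<d. \<Sum>b<d. if {#a, b, u#} = m then T a b w else 0)"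
    by (simp only: m0_iff)
  also have "\<dots> = (\<Sum>a<d. \<Sum>b<d. \<Sum>c<d. if a = u then (if {#a, b, c#} = m then T w b c else 0) else 0)
     + (\<Sum>a<d. \<Sum>b<d. \<Sum>c<d. if b = u then (if {#a, b, c#} = m then T a w c else 0) else 0)
     + (\<Sum>a<d. \<Sum>b<d. \<Sum>c<d. if c = u then (if {#a, b, c#} = m then T a b w else 0) else 0)"
    using u by (simp add: sum_if_zero_distrib)
  also have "\<dots> = ?rhs"
    unfolding sum.distrib[symmetric] by (intro sum.cong refl) auto
  finally show ?thesis .
qed

(* Coefficient tensor of D(f), for the derivation D = sum M_uw x_u d/dx_w and the cubic f
   with coefficient tensor T. *)
definition gl_tensor_act ::
  "nat \<Rightarrow> (nat \<Rightarrow> nat \<Rightarrow> real) \<Rightarrow> (nat \<Rightarrow> nat \<Rightarrow> nat \<Rightarrow> real) \<Rightarrow> nat \<Rightarrow> nat \<Rightarrow> nat \<Rightarrow> real" where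
  "gl_tensor_act d M T a b c =
    (\<Sum>w<d. M a w * T w b c) + (\<Sum>w<d. M b w * T a w c) + (\<Sum>w<d. M c w * T a b w)"

lemma sum_swap_inward3:
  "(\<Sum>u\<in>U. \<Sum>a\<in>A. \<Sum>b\<in>B. \<Sum>c\<in>C. F u a b c) = (\<Sum>a\<in>A. \<Sum>b\<in>B. \<Sum>c\<in>C. \<Sum>u\<in>U. F u a b c)"
proof -
  have "(\<Sum>u\<in>U. \<Sum>a\<in>A. \<Sum>b\<in>B. \<Sum>c\<in>C. F u a b c) = (\<Sum>a\<in>A. \<Sum>u\<in>U. \<Sum>b\<in>B. \<Sum>c\<in>C. F u a b c)"
    by (rule sum.swap)
  also have "\<dots> = (\<Sum>a\<in>A. \<Sum>b\<in>B. \<Sum>u\<in>U. \<Sum>c\<in>C. F u a b c)"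
    by (rule sum.cong[OF refl], rule sum.swap)
  also have "\<dots> = (\<Sum>a\<in>A. \<Sum>b\<in>B. \<Sum>c\<in>C. \<Sum>u\<in>U. F u a b c)"
    by (rule sum.cong[OF refl], rule sum.cong[OF refl], rule sum.swap)
  finally show ?thesis .
qed

lemma sum_E_act_cubic_coeff:
  "(\<Sum>u<d. \<Sum>w<d. M u w * E_act u w (cubic_coeff d T) m) = cubic_coeff d (gl_tensor_act d M T) m"
proof -
  define X where "X u w a b c =
    (if a = u then T w b c else 0) + (if b = u then T a w c else 0) + (if c = u then T a b w else 0)"
    for u w a b c
  have gl: "(\<Sum>u<d. \<Sum>w<d. M u w * X u w a b c) = gl_tensor_act d M T a b c" if "a < d" "b < d" "c < d"
    for a b c
    using that by (simp add: X_def gl_tensor_act_def distrib_left sum.distrib sum_if_zero_distrib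
        if_distrib[where f = "\<lambda>x. y * x" for y] cong: if_cong)
  have "(\<Sum>u<d. \<Sum>w<d. M u w * E_act u w (cubic_coeff d T) m)
      = (\<Sum>u<d. \<Sum>w<d. \<Sum>a<d. \<Sum>b<d. \<Sum>c<d. if {#a, b, c#} = m then M u w * X u w a b c else 0)"
    by (simp add: E_act_cubic_coeff X_def sum_distrib_left if_distrib[where f = "\<lambda>x. y * x" for y]
        cong: if_cong)
  also have "\<dots> = (\<Sum>u<d. \<Sum>a<d. \<Sum>b<d. \<Sum>c<d. \<Sum>w<d. if {#a, b, c#} = m then M u w * X u w a b c else 0)"
    by (rule sum.cong[OF refl], rule sum_swap_inward3)
  also have "\<dots> = (\<Sum>a<d. \<Sum>b<d. \<Sum>c<d. \<Sum>u<d. \<Sum>w<d. if {#a, b, c#} = m then M u w * X u w a b c else 0)"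
    by (rule sum_swap_inward3)
  also have "\<dots> = cubic_coeff d (gl_tensor_act d M T) m"
    unfolding cubic_coeff_def by (intro sum.cong refl) (simp add: sum_if_zero_distrib gl)
  finally show ?thesis .
qed

lemma gl_tensor_act_sym3_eq_0:
  fixes v :: "nat \<Rightarrow> real" and A :: "nat \<Rightarrow> nat \<Rightarrow> real"
  defines "S p q \<equiv> A p q + A q p"
  assumes Mv: "\<And>p. p < d \<Longrightarrow> (\<Sum>w<d. M p w * v w) = 0"
    and MS_skew: "\<And>p q. p < d \<Longrightarrow> q < d \<Longrightarrow> (\<Sum>w<d. M p w * S w q) + (\<Sum>w<d. M q w * S w p) = 0"
    and abc: "a < d" "b < d" "c < d"
  shows "gl_tensor_act d M (sym3 (\<lambda>k p q. v k * A p q)) a b c = 0"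
proof -
  let ?T = "sym3 (\<lambda>k p q. v k * A p q)"
  define MS where "MS p q = (\<Sum>w<d. M p w * S w q)" for p q
  have row: "(\<Sum>w<d. M p w * ?T w q r) = (v q * MS p r + v r * MS p q) / 6" if "p < d" for p q r
  proof -
    have "M p w * ?T w q r = M p w * v w * S q r / 6 + v q * (M p w * S w r) / 6 + v r * (M p w * S w q) / 6"
      for w
      by (simp add: sym3_def S_def field_simps)
    then have "(\<Sum>w<d. M p w * ?T w q r)
        = (\<Sum>w<d. M p w * v w) * S q r / 6 + v q * MS p r / 6 + v r * MS p q / 6"
      by (simp add: MS_def sum.distrib sum_distrib_left sum_distrib_right sum_divide_distrib)
    then show ?thesis
      using Mv[OF that] by (simp add: add_divide_distrib)
  qed
  have "?T a w c = ?T w a c" "?T a b w = ?T w a b" for w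
    by (rule sym3_cong_mset, simp add: add_mset_commute)+
  then have "gl_tensor_act d M ?T a b c
      = (\<Sum>w<d. M a w * ?T w b c) + (\<Sum>w<d. M b w * ?T w a c) + (\<Sum>w<d. M c w * ?T w a b)"
    by (simp add: gl_tensor_act_def)
  also have "\<dots> = (v a * (MS b c + MS c b) + v b * (MS a c + MS c a) + v c * (MS a b + MS b a)) / 6"
    using abc by (simp only: row) (simp add: field_simps)
  also have "\<dots> = 0"
    using abc by (simp add: MS_def MS_skew)
  finally show ?thesis .
qed

section \<open>Traceless stabilizers of a linear and a quadratic form\<close>

lemma sum_lessThan_eq_first3:
  fixes f :: "nat \<Rightarrow> 'a::comm_monoid_add"
  assumes "3 \<le> d" "\<And>i. 3 \<le> i \<Longrightarrow> f i = 0"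
  shows "(\<Sum>i<d. f i) = f 0 + f 1 + f 2"
proof -
  have "(\<Sum>i<d. f i) = (\<Sum>i<3. f i)"
    by (rule sum.mono_neutral_right) (use assms in auto)
  also have "\<dots> = f 0 + f 1 + f 2"
    by (simp add: numeral_3_eq_3 numeral_2_eq_2 add_ac)
  finally show ?thesis .
qed

lemma exists_orthogonal_pair_orthogonal_to:
  fixes v :: "nat \<Rightarrow> real"
  assumes d: "3 \<le> d"
  obtains \<alpha> \<beta> where "(\<Sum>i<d. \<alpha> i * v i) = 0" "(\<Sum>i<d. \<beta> i * v i) = 0" "(\<Sum>i<d. \<alpha> i * \<beta> i) = 0"
    "(\<Sum>i<d. \<alpha> i * \<alpha> i) > 0" "(\<Sum>i<d. \<beta> i * \<beta> i) > 0"
proof (cases "v 0 = 0 \<and> v 1 = 0")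
  case True
  define \<alpha> :: "nat \<Rightarrow> real" where "\<alpha> i = (if i = 0 then 1 else 0)" for i
  define \<beta> :: "nat \<Rightarrow> real" where "\<beta> i = (if i = 1 then 1 else 0)" for i
  show ?thesis
    by (rule that[of \<alpha> \<beta>]) (use True d in \<open>subst sum_lessThan_eq_first3, auto simp: \<alpha>_def \<beta>_def\<close>)+
next
  case False
  define \<alpha> :: "nat \<Rightarrow> real" where "\<alpha> i = (if i = 0 then - v 1 else if i = 1 then v 0 else 0)" for i
  define \<beta> :: "nat \<Rightarrow> real" where "\<beta> i = (if i = 0 then - v 0 * v 2 else if i = 1 then - v 1 * v 2
     else if i = 2 then v 0 * v 0 + v 1 * v 1 else 0)" for i
  have pos: "v 0 * v 0 + v 1 * v 1 > 0"
    using False by (simp add: sum_squares_gt_zero_iff)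
  have "(\<Sum>i<d. \<beta> i * \<beta> i) = (v 0 * v 0 + v 1 * v 1) * (v 0 * v 0 + v 1 * v 1 + v 2 * v 2)"
    using d by (subst sum_lessThan_eq_first3) (auto simp: \<beta>_def algebra_simps)
  also have "\<dots> > 0"
    using pos by (intro mult_pos_pos add_pos_nonneg[OF pos]) simp_all
  finally have "(\<Sum>i<d. \<beta> i * \<beta> i) > 0" .
  then show ?thesis
    by (rule that[of \<alpha> \<beta>, rotated 4]) (use d pos in \<open>subst sum_lessThan_eq_first3, auto simp: \<alpha>_def \<beta>_def algebra_simps\<close>)+
qed

lemma exists_nonzero_factor_of_sum_nonzero:
  fixes f g :: "nat \<Rightarrow> 'a::semiring_0"
  assumes "(\<Sum>i<d. f i * g i) \<noteq> 0"
  shows "\<exists>i<d. f i \<noteq> 0"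
  using assms by (rule contrapos_np) simp

(* Exactly the conditions for the derivation sum M_uw x_u d/dx_w, with M nonzero and traceless,
   to kill the linear form v . x and the quadratic form x^T S x. *)
definition sl_stabilizer ::
  "nat \<Rightarrow> (nat \<Rightarrow> real) \<Rightarrow> (nat \<Rightarrow> nat \<Rightarrow> real) \<Rightarrow> (nat \<Rightarrow> nat \<Rightarrow> real) \<Rightarrow> bool" where
  "sl_stabilizer d v S M \<longleftrightarrow>
     (\<forall>p<d. (\<Sum>w<d. M p w * v w) = 0) \<and>
     (\<forall>p<d. \<forall>q<d. (\<Sum>w<d. M p w * S w q) + (\<Sum>w<d. M q w * S w p) = 0) \<and>
     (\<Sum>p<d. M p p) = 0 \<and> (\<exists>p<d. \<exists>q<d. M p q \<noteq> 0)"

lemma sl_stabilizer_outer_product: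
  fixes \<alpha> \<beta> v :: "nat \<Rightarrow> real"
  assumes S_sym: "\<And>p q. S p q = S q p"
    and \<beta>v: "(\<Sum>i<d. \<beta> i * v i) = 0" and \<alpha>\<beta>: "(\<Sum>i<d. \<alpha> i * \<beta> i) = 0"
    and S\<beta>: "\<And>p. p < d \<Longrightarrow> (\<Sum>w<d. S p w * \<beta> w) = 0"
    and nonzero: "i < d" "\<alpha> i \<noteq> 0" "j < d" "\<beta> j \<noteq> 0"
  shows "sl_stabilizer d v S (\<lambda>p q. \<alpha> p * \<beta> q)"
proof -
  have "(\<Sum>w<d. \<beta> w * S w q) = 0" if "q < d" for q
    using S\<beta>[OF that] by (simp add: S_sym[of q] mult.commute)
  then show ?thesis
    using \<beta>v \<alpha>\<beta> nonzero unfolding sl_stabilizer_def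
    by (auto simp: mult.assoc simp flip: sum_distrib_left)
qed

lemma sl_stabilizer_commutator:
  fixes \<alpha> \<beta> v :: "nat \<Rightarrow> real"
  assumes S_sym: "\<And>p q. S p q = S q p"
    and \<alpha>v: "(\<Sum>i<d. \<alpha> i * v i) = 0" and \<beta>v: "(\<Sum>i<d. \<beta> i * v i) = 0"
    and \<alpha>\<beta>: "(\<Sum>i<d. \<alpha> i * \<beta> i) = 0" and \<alpha>\<alpha>: "(\<Sum>i<d. \<alpha> i * \<alpha> i) \<noteq> 0"
    and p0: "p0 < d" "(\<Sum>w<d. S p0 w * \<beta> w) \<noteq> 0"
  shows "sl_stabilizer d v S (\<lambda>p q. (\<Sum>w<d. S p w * \<alpha> w) * \<beta> q - (\<Sum>w<d. S p w * \<beta> w) * \<alpha> q)"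
proof -
  define S\<alpha> where "S\<alpha> p = (\<Sum>w<d. S p w * \<alpha> w)" for p
  define S\<beta> where "S\<beta> p = (\<Sum>w<d. S p w * \<beta> w)" for p
  define M where "M p q = S\<alpha> p * \<beta> q - S\<beta> p * \<alpha> q" for p q
  have S\<alpha>_sym: "(\<Sum>w<d. \<alpha> w * S w q) = S\<alpha> q" and S\<beta>_sym: "(\<Sum>w<d. \<beta> w * S w q) = S\<beta> q" for q
    unfolding S\<alpha>_def S\<beta>_def by (simp_all add: S_sym[of q] mult.commute)
  have Mv: "(\<Sum>w<d. M p w * v w) = 0" for p
    using \<alpha>v \<beta>v by (simp add: M_def left_diff_distrib sum_subtractf mult.assoc flip: sum_distrib_left)
  have MS: "(\<Sum>w<d. M p w * S w q) = S\<alpha> p * S\<beta> q - S\<beta> p * S\<alpha> q" for p q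
    by (simp add: M_def left_diff_distrib sum_subtractf mult.assoc S\<alpha>_sym S\<beta>_sym flip: sum_distrib_left)
  have "(\<Sum>p<d. S\<alpha> p * \<beta> p) = (\<Sum>p<d. S\<beta> p * \<alpha> p)"
    unfolding S\<alpha>_def S\<beta>_def sum_distrib_right by (subst sum.swap) (simp add: S_sym mult_ac)
  then have trace: "(\<Sum>p<d. M p p) = 0"
    by (simp add: M_def sum_subtractf)
  have "(\<Sum>q<d. M p0 q * \<alpha> q) = S\<alpha> p0 * (\<Sum>q<d. \<alpha> q * \<beta> q) - S\<beta> p0 * (\<Sum>q<d. \<alpha> q * \<alpha> q)"
    by (simp add: M_def right_diff_distrib sum_subtractf sum_distrib_left mult_ac)
  also have "\<dots> \<noteq> 0"
    using \<alpha>\<beta> \<alpha>\<alpha> p0 by (simp add: S\<beta>_def)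
  finally have "\<exists>q<d. M p0 q \<noteq> 0"
    using exists_nonzero_factor_of_sum_nonzero by blast
  then show ?thesis
    using Mv MS trace p0(1) unfolding sl_stabilizer_def M_def S\<alpha>_def S\<beta>_def by auto
qed

lemma exists_sl_stabilizer:
  fixes v :: "nat \<Rightarrow> real" and S :: "nat \<Rightarrow> nat \<Rightarrow> real"
  assumes d: "3 \<le> d" and S_sym: "\<And>p q. S p q = S q p"
  shows "\<exists>M. sl_stabilizer d v S M"
proof -
  obtain \<alpha> \<beta> where \<alpha>v: "(\<Sum>i<d. \<alpha> i * v i) = 0" and \<beta>v: "(\<Sum>i<d. \<beta> i * v i) = 0"
    and \<alpha>\<beta>: "(\<Sum>i<d. \<alpha> i * \<beta> i) = 0" and \<alpha>\<alpha>: "(\<Sum>i<d. \<alpha> i * \<alpha> i) > 0"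
    and \<beta>\<beta>: "(\<Sum>i<d. \<beta> i * \<beta> i) > 0"
    using exists_orthogonal_pair_orthogonal_to[OF d, of v] by blast
  show ?thesis
  proof (cases "\<forall>p<d. (\<Sum>w<d. S p w * \<beta> w) = 0")
    case True
    obtain i j where "i < d" "\<alpha> i \<noteq> 0" "j < d" "\<beta> j \<noteq> 0"
      using exists_nonzero_factor_of_sum_nonzero[of \<alpha> \<alpha> d] exists_nonzero_factor_of_sum_nonzero[of \<beta> \<beta> d]
        \<alpha>\<alpha> \<beta>\<beta> by auto
    then show ?thesis
      using sl_stabilizer_outer_product[where S = S, OF S_sym \<beta>v \<alpha>\<beta>] True by blast
  next
    case False
    then obtain p0 where "p0 < d" "(\<Sum>w<d. S p0 w * \<beta> w) \<noteq> 0"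
      by blast
    then show ?thesis
      using sl_stabilizer_commutator[where S = S, OF S_sym \<alpha>v \<beta>v \<alpha>\<beta>] \<alpha>\<alpha> by force
  qed
qed

section \<open>The Lie algebra flattening\<close>

lemma sum_list_concat: "sum_list (concat xss) = sum_list (map sum_list xss)"
  by (induction xss) simp_all

lemma sum_list_map_sl_basis:
  "sum_list (map f (sl_basis d)) =
    (\<Sum>u<d. \<Sum>w<d. if u \<noteq> w then f (Inl (u, w)) else 0) + (\<Sum>u<d - 1. f (Inr u))"
  by (simp add: sl_basis_def map_concat comp_def sum_list_concat interv_sum_list_conv_sum_set_nat
      atLeast0LessThan if_distrib[of "\<lambda>xs. sum_list (map f xs)"] del: map_eq_Cons_conv cong: if_cong)

lemma length_sl_basis: "length (sl_basis d) = d\<^sup>2 - 1"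
proof -
  have off_diag: "(\<Sum>w<d. if u \<noteq> w then 1 else 0) = d - 1" if "u < d" for u :: nat
  proof -
    have "{..<d} \<inter> {w. u \<noteq> w} = {..<d} - {u}"
      by auto
    then show ?thesis
      using that by (simp add: sum.If_cases)
  qed
  have "length (sl_basis d) = sum_list (map (\<lambda>_. 1::nat) (sl_basis d))"
    by (simp add: sum_list_triv)
  also have "\<dots> = d * (d - 1) + (d - 1)"
    by (simp add: sum_list_map_sl_basis off_diag del: One_nat_def)
  also have "\<dots> = d\<^sup>2 - 1"
    by (cases d) (simp_all add: power2_eq_square)
  finally show ?thesis .
qed

lemma Inl_mem_sl_basis: "u < d \<Longrightarrow> w < d \<Longrightarrow> u \<noteq> w \<Longrightarrow> Inl (u, w) \<in> set (sl_basis d)"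
  unfolding sl_basis_def by (simp add: set_concat)

lemma Inr_mem_sl_basis: "u < d - 1 \<Longrightarrow> Inr u \<in> set (sl_basis d)"
  unfolding sl_basis_def by simp

(* For traceless M, sum_{u ~= w} M_uw E_uw + sum_{u < d-1} M_uu H_u = M, so these are the
   coordinates of M in sl_basis. *)
definition sl_coords :: "nat \<Rightarrow> (nat \<Rightarrow> nat \<Rightarrow> real) \<Rightarrow> real vec" where
  "sl_coords d M = vec (length (sl_basis d))
     (\<lambda>i. case sl_basis d ! i of Inl (u, w) \<Rightarrow> M u w | Inr u \<Rightarrow> M u u)"

lemma sum_diag_traceless:
  fixes M E :: "nat \<Rightarrow> nat \<Rightarrow> real"
  assumes trace: "(\<Sum>u<d. M u u) = 0"
  shows "(\<Sum>u<d - 1. M u u * (E u u - E (d - 1) (d - 1))) = (\<Sum>u<d. M u u * E u u)"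
proof (cases d)
  case (Suc n)
  then have "(\<Sum>u<n. M u u) = - M n n"
    using trace by (simp add: eq_neg_iff_add_eq_0)
  then show ?thesis
    using Suc by (simp add: right_diff_distrib sum_subtractf flip: sum_distrib_right)
qed simp

lemma sum_off_diag_add_diag:
  assumes "u \<in> A" "finite A"
  shows "(\<Sum>w\<in>A. if u \<noteq> w then f w else 0) + f u = sum f A"
proof -
  have "A \<inter> {w. u \<noteq> w} = A - {u}"
    by auto
  then show ?thesis
    using assms by (simp add: sum.If_cases sum.remove[of A u f] add.commute)
qed

lemma M_Lie_mult_sl_coords:
  assumes trace: "(\<Sum>u<d. M u u) = 0" and i: "i < length (monos3 d)"
  shows "(M_Lie d cf *\<^sub>v sl_coords d M) $ i = (\<Sum>u<d. \<Sum>w<d. M u w * E_act u w cf (monos3 d ! i))"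
proof -
  let ?m = "monos3 d ! i"
  let ?E = "\<lambda>u w. E_act u w cf ?m"
  have "(M_Lie d cf *\<^sub>v sl_coords d M) $ i = sum_list (map (\<lambda>b. lie_act d cf b ?m *
      (case b of Inl (u, w) \<Rightarrow> M u w | Inr u \<Rightarrow> M u u)) (sl_basis d))"
    using i by (simp add: M_Lie_def sl_coords_def scalar_prod_def sum_list_sum_nth atLeast0LessThan)
  also have "\<dots> = (\<Sum>u<d. \<Sum>w<d. if u \<noteq> w then M u w * ?E u w else 0)
      + (\<Sum>u<d - 1. M u u * (?E u u - ?E (d - 1) (d - 1)))"
    by (simp add: sum_list_map_sl_basis lie_act_def mult.commute cong: if_cong)
  also have "\<dots> = (\<Sum>u<d. \<Sum>w<d. if u \<noteq> w then M u w * ?E u w else 0) + (\<Sum>u<d. M u u * ?E u u)"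
    using sum_diag_traceless[where M = M and E = ?E, OF trace] by simp
  also have "\<dots> = (\<Sum>u<d. \<Sum>w<d. M u w * ?E u w)"
    unfolding sum.distrib[symmetric] by (intro sum.cong refl sum_off_diag_add_diag) auto
  finally show ?thesis .
qed

lemma sl_coords_eq_0D:
  assumes trace: "(\<Sum>u<d. M u u) = 0" and coords: "sl_coords d M = 0\<^sub>v (length (sl_basis d))"
    and uw: "u < d" "w < d"
  shows "M u w = 0"
proof -
  have coord: "(case b of Inl (u, w) \<Rightarrow> M u w | Inr u \<Rightarrow> M u u) = 0" if b: "b \<in> set (sl_basis d)" for b
  proof -
    obtain k where "k < length (sl_basis d)" "sl_basis d ! k = b"
      using b by (auto simp: in_set_conv_nth)
    then show ?thesis
      using arg_cong[OF coords, of "\<lambda>x. x $ k"] by (simp add: sl_coords_def)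
  qed
  have diag: "M u u = 0" if "u < d - 1" for u
    using coord[OF Inr_mem_sl_basis[OF that]] by simp
  show ?thesis
  proof (cases "u = w")
    case False
    then show ?thesis
      using coord[OF Inl_mem_sl_basis[OF uw False]] by simp
  next
    case True
    have "(\<Sum>u<d. M u u) = (\<Sum>u<d - 1. M u u) + M (d - 1) (d - 1)"
      using uw by (cases d) (simp_all add: lessThan_Suc)
    then have "M (d - 1) (d - 1) = 0"
      using trace diag by simp
    moreover have "u < d - 1 \<or> u = d - 1"
      using uw by linarith
    ultimately show ?thesis
      using True diag by auto
  qed
qed

lemma rank_M_Lie_sym3_less:
  fixes v :: "nat \<Rightarrow> real" and A :: "nat \<Rightarrow> nat \<Rightarrow> real"
  assumes d: "3 \<le> d"
  shows "vec_space.rank (length (monos3 d)) (M_Lie d (cubic_coeff d (sym3 (\<lambda>k p q. v k * A p q))))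
    < d\<^sup>2 - 1"
proof -
  define S where "S p q = A p q + A q p" for p q
  let ?cf = "cubic_coeff d (sym3 (\<lambda>k p q. v k * A p q))"
  obtain M where "sl_stabilizer d v S M"
    using exists_sl_stabilizer[OF d, of S v] by (auto simp: S_def add.commute)
  then have Mv: "\<And>p. p < d \<Longrightarrow> (\<Sum>w<d. M p w * v w) = 0"
    and MS_skew: "\<And>p q. p < d \<Longrightarrow> q < d \<Longrightarrow> (\<Sum>w<d. M p w * S w q) + (\<Sum>w<d. M q w * S w p) = 0"
    and trace: "(\<Sum>p<d. M p p) = 0" and nonzero: "\<exists>p<d. \<exists>q<d. M p q \<noteq> 0"
    by (auto simp: sl_stabilizer_def)
  have "M_Lie d ?cf *\<^sub>v sl_coords d M = 0\<^sub>v (length (monos3 d))"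
  proof (rule eq_vecI)
    fix i assume "i < dim_vec (0\<^sub>v (length (monos3 d)) :: real vec)"
    then have i: "i < length (monos3 d)"
      by simp
    have "(M_Lie d ?cf *\<^sub>v sl_coords d M) $ i = cubic_coeff d (gl_tensor_act d M (sym3 (\<lambda>k p q. v k * A p q))) (monos3 d ! i)"
      by (simp add: M_Lie_mult_sl_coords[where M = M, OF trace i] sum_E_act_cubic_coeff)
    also have "\<dots> = cubic_coeff d (\<lambda>_ _ _. 0) (monos3 d ! i)"
      by (rule cong[OF cubic_coeff_cong refl], rule gl_tensor_act_sym3_eq_0)
        (use Mv MS_skew in \<open>auto simp: S_def\<close>)
    finally show "(M_Lie d ?cf *\<^sub>v sl_coords d M) $ i = 0\<^sub>v (length (monos3 d)) $ i"
      using i by (simp add: cubic_coeff_def)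
  qed (simp add: M_Lie_def)
  moreover have "sl_coords d M \<noteq> 0\<^sub>v (length (sl_basis d))"
    using sl_coords_eq_0D[where M = M, OF trace] nonzero by blast
  ultimately have "vec_space.rank (length (monos3 d)) (M_Lie d ?cf) < length (sl_basis d)"
    by (intro vec_space.rank_less_of_kernel) (auto simp: M_Lie_def sl_coords_def)
  then show ?thesis
    by (simp add: length_sl_basis)
qed

theorem mainTheorem7:
  fixes Q K V :: "real mat" and a d t j :: nat
  assumes "d \<ge> 3"
    and "Q \<in> carrier_mat a d" and "K \<in> carrier_mat a d" and "V \<in> carrier_mat 1 d"
    and "j < t"
  defines "A \<equiv> attn_A Q K"
    and "T \<equiv> T_tensor Q K V t j"
    and "v \<equiv> (\<lambda>u. V $$ (0, u))"
  shows "vec_space.rank d (N_mat d T) \<le> 2 * vec_space.rank d A + 1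
     \<and> (2 * vec_space.rank d A + 1 < d \<longrightarrow>
          (\<forall>I J. I \<subseteq> {..<d} \<and> J \<subseteq> {..<d} \<and> card I = 2 * vec_space.rank d A + 2
                 \<and> card J = 2 * vec_space.rank d A + 2 \<longrightarrow> det (submatrix (N_mat d T) I J) = 0))
     \<and> (\<forall>x. f_T d T x = (\<Sum>p<d. \<Sum>q<d. x p * A $$ (p, q) * x q) * (\<Sum>u<d. v u * x u))
     \<and> vec_space.rank (length (monos3 d)) (M_Lie d (cubic_coeff d T)) < d\<^sup>2 - 1
     \<and> (\<forall>I. I \<subseteq> {..<length (monos3 d)} \<and> card I = d\<^sup>2 - 1 \<longrightarrow>
          det (submatrix (M_Lie d (cubic_coeff d T)) I UNIV) = 0)"
proof -
  have A: "A \<in> carrier_mat d d"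
    using assms(2,3) by (simp add: A_def attn_A_def)
  have T: "T k1 k2 k3 = sym3 (\<lambda>k p q. v k * A $$ (p, q)) k1 k2 k3" if "k1 < d" "k2 < d" "k3 < d"
    for k1 k2 k3
    unfolding T_def A_def v_def using T_tensor_eq_sym3[OF assms(2-5) that] .
  have rank_N: "vec_space.rank d (N_mat d T) \<le> 2 * vec_space.rank d A + 1"
    using rank_N_mat_sym3[OF A, of v] N_mat_cong[OF T] by simp
  have rank_Lie: "vec_space.rank (length (monos3 d)) (M_Lie d (cubic_coeff d T)) < d\<^sup>2 - 1"
    using rank_M_Lie_sym3_less[OF assms(1), of v "\<lambda>p q. A $$ (p, q)"] cubic_coeff_cong[OF T] by simp
  have "det (submatrix (N_mat d T) I J) = 0" if "J \<subseteq> {..<d}" "card J = 2 * vec_space.rank d A + 2" for I J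
    using rank_N that by (intro det_submatrix_eq_0_of_rank_less[of _ d d]) (simp_all add: N_mat_def)
  moreover have "f_T d T x = (\<Sum>p<d. \<Sum>q<d. x p * A $$ (p, q) * x q) * (\<Sum>u<d. v u * x u)" for x
    using f_T_sym3_linear_quadratic[of d v "\<lambda>p q. A $$ (p, q)" x] f_T_cong[OF T] by simp
  moreover have "det (submatrix (M_Lie d (cubic_coeff d T)) I UNIV) = 0" for I
    using rank_Lie by (intro det_submatrix_UNIV_eq_0_of_rank_less) (simp_all add: M_Lie_def length_sl_basis)
  ultimately show ?thesis
    using rank_N rank_Lie by auto
qed

end
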